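(* Let $k\geq 3$ be an integer, let $G$ be a graph, and let $G'$ be the graph obtained from $G$ by the $k$-edge-gadget transformation (with respect to any choice of orientations). Then every $k$-partial $k$-coloring $\gamma$ of $G'$ satisfies $\gamma(u)\neq\gamma(v)$ for every edge $\{u,v\}\in E(G)$.
   Context: A $k$-partial $c$-coloring of a graph $G=(V,E)$ is a map $\gamma:V\to\{1,\dots,c\}$ such that every vertex $v$ has at least $\min\{k,\deg_G(v)\}$ neighbors $u$ with $\gamma(u)\neq\gamma(v)$. The $k$-edge-gadget transformation: given a graph $G$ and, for each edge $\{u,v\}\in E(G)$, a fixed choice of ordered pair $(u,v)$, the graph $G'$ is obtained from $G$ by keeping all vertices of $G$, deleting every edge $\{u,v\}$ of $G$, and for each such edge adding $k$ new vertices $(u,v,1),\dots,(u,v,k)$ that form a clique $K_k$, together with the edges $\{u,(u,v,j)\}$ for $j=1,\dots,k-1$ and the edge $\{v,(u,v,k)\}$. (The gadget vertices of distinct edges are distinct.) *)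

theory Defs
  imports Main
begin

definition simple_graph :: "'a set \<Rightarrow> 'a set set \<Rightarrow> bool" where
  "simple_graph V E \<longleftrightarrow> finite V \<and>
     (\<forall>e\<in>E. \<exists>u v. u \<noteq> v \<and> u \<in> V \<and> v \<in> V \<and> e = {u, v})"

definition neighbors :: "'a set \<Rightarrow> 'a set set \<Rightarrow> 'a \<Rightarrow> 'a set" where
  "neighbors V E v = {u \<in> V. {u, v} \<in> E}"

definition degree :: "'a set \<Rightarrow> 'a set set \<Rightarrow> 'a \<Rightarrow> nat" where
  "degree V E v = card (neighbors V E v)"

definition partial_coloring ::
  "'a set \<Rightarrow> 'a set set \<Rightarrow> nat \<Rightarrow> nat \<Rightarrow> ('a \<Rightarrow> nat) \<Rightarrow> bool" where
  "partial_coloring V E k c \<gamma> \<longleftrightarrow>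
     (\<forall>v\<in>V. \<gamma> v \<in> {1..c}) \<and>
     (\<forall>v\<in>V. card {u \<in> neighbors V E v. \<gamma> u \<noteq> \<gamma> v} \<ge> min k (degree V E v))"

definition orientation :: "'a set set \<Rightarrow> ('a set \<Rightarrow> 'a \<times> 'a) \<Rightarrow> bool" where
  "orientation E ori \<longleftrightarrow> (\<forall>e\<in>E. {fst (ori e), snd (ori e)} = e)"

definition gadget_V ::
  "'a set \<Rightarrow> 'a set set \<Rightarrow> ('a set \<Rightarrow> 'a \<times> 'a) \<Rightarrow> nat \<Rightarrow> ('a + ('a \<times> 'a \<times> nat)) set" where
  "gadget_V V E ori k = Inl ` V \<union>
     {Inr (u, v, j) | e u v j. e \<in> E \<and> ori e = (u, v) \<and> j \<in> {1..k}}"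

definition gadget_E ::
  "'a set set \<Rightarrow> ('a set \<Rightarrow> 'a \<times> 'a) \<Rightarrow> nat \<Rightarrow> ('a + ('a \<times> 'a \<times> nat)) set set" where
  "gadget_E E ori k =
     {{Inr (u, v, i), Inr (u, v, j)} | e u v i j.
         e \<in> E \<and> ori e = (u, v) \<and> i \<in> {1..k} \<and> j \<in> {1..k} \<and> i \<noteq> j}
   \<union> {{Inl u, Inr (u, v, j)} | e u v j. e \<in> E \<and> ori e = (u, v) \<and> j \<in> {1..k-1}}
   \<union> {{Inl v, Inr (u, v, k)} | e u v. e \<in> E \<and> ori e = (u, v)}"

end

theory Submission
  imports Defs
begin

(* The k gadget vertices of an edge uv form a clique whose vertices have degree k, so a
   k-partial k-colouring must separate each of them from all its neighbours; in particular
   the clique uses all k colours.  The tail u is adjacent to the clique vertices 1..k-1,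
   hence gets the colour of vertex k, which differs from the colour of its neighbour v.
   The argument only needs k > 0. *)

lemma partial_coloring_neighbor_color_differs:
  assumes "partial_coloring V E k c \<gamma>" and "w \<in> V"
    and "finite (neighbors V E w)" and "degree V E w \<le> k"
    and "x \<in> neighbors V E w"
  shows "\<gamma> x \<noteq> \<gamma> w"
proof -
  let ?N = "neighbors V E w"
  let ?A = "{u \<in> ?N. \<gamma> u \<noteq> \<gamma> w}"
  have "card ?A \<ge> min k (degree V E w)"
    using assms(1,2) unfolding partial_coloring_def by blast
  with assms(4) have "card ?N \<le> card ?A" unfolding degree_def by simp
  then have "?A = ?N" using assms(3) by (intro card_seteq) auto
  with assms(5) show ?thesis by blast
qed

lemma partial_coloring_clique_uses_all_colors:
  assumes "partial_coloring V E k c \<gamma>" and "K \<subseteq> V" and "finite K" and "card K = c"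
    and clique: "\<And>x y. x \<in> K \<Longrightarrow> y \<in> K \<Longrightarrow> x \<noteq> y \<Longrightarrow> {x, y} \<in> E"
    and low_degree: "\<And>w. w \<in> K \<Longrightarrow> finite (neighbors V E w) \<and> degree V E w \<le> k"
  shows "\<gamma> ` K = {1..c}"
proof -
  have "inj_on \<gamma> K"
  proof (rule inj_onI, rule ccontr)
    fix x y assume "x \<in> K" "y \<in> K" "\<gamma> x = \<gamma> y" "x \<noteq> y"
    then have "x \<in> neighbors V E y"
      using clique assms(2) unfolding neighbors_def by auto
    with \<open>\<gamma> x = \<gamma> y\<close> \<open>y \<in> K\<close> show False
      using partial_coloring_neighbor_color_differs[OF assms(1)] low_degree assms(2) by blast
  qed
  moreover have "\<gamma> ` K \<subseteq> {1..c}"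
    using assms(1,2) unfolding partial_coloring_def by auto
  ultimately show ?thesis
    using assms(3,4) by (metis card_image card_subset_eq finite_atLeastAtMost card_atLeastAtMost diff_Suc_1)
qed

lemma gadget_V_InrI:
  "e \<in> E \<Longrightarrow> ori e = (a, b) \<Longrightarrow> j \<in> {1..k} \<Longrightarrow> Inr (a, b, j) \<in> gadget_V V E ori k"
  unfolding gadget_V_def by blast

lemma gadget_V_InlI: "a \<in> V \<Longrightarrow> Inl a \<in> gadget_V V E ori k"
  unfolding gadget_V_def by blast

lemma gadget_E_cliqueI:
  "e \<in> E \<Longrightarrow> ori e = (a, b) \<Longrightarrow> i \<in> {1..k} \<Longrightarrow> j \<in> {1..k} \<Longrightarrow> i \<noteq> j \<Longrightarrow>
    {Inr (a, b, i), Inr (a, b, j)} \<in> gadget_E E ori k"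
  unfolding gadget_E_def by (intro UnI1 CollectI) blast

lemma gadget_E_tailI:
  "e \<in> E \<Longrightarrow> ori e = (a, b) \<Longrightarrow> j \<in> {1..k-1} \<Longrightarrow> {Inl a, Inr (a, b, j)} \<in> gadget_E E ori k"
  unfolding gadget_E_def by (intro UnI1 UnI2 CollectI) blast

lemma gadget_E_headI:
  "e \<in> E \<Longrightarrow> ori e = (a, b) \<Longrightarrow> {Inl b, Inr (a, b, k)} \<in> gadget_E E ori k"
  unfolding gadget_E_def by (intro UnI2 CollectI) blast

lemma neighbors_gadget_Inr_subset:
  "neighbors (gadget_V V E ori k) (gadget_E E ori k) (Inr (a, b, j))
     \<subseteq> insert (Inl (if j = k then b else a)) ((\<lambda>i. Inr (a, b, i)) ` ({1..k} - {j}))"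
  unfolding neighbors_def gadget_E_def by (auto simp: doubleton_eq_iff)

lemma degree_gadget_Inr_le:
  assumes "0 < k" and "j \<in> {1..k}"
  shows "finite (neighbors (gadget_V V E ori k) (gadget_E E ori k) (Inr (a, b, j)))"
    and "degree (gadget_V V E ori k) (gadget_E E ori k) (Inr (a, b, j)) \<le> k"
proof -
  let ?S = "insert (Inl (if j = k then b else a)) ((\<lambda>i. Inr (a, b, i)) ` ({1..k} - {j}))"
  have "card ((\<lambda>i. Inr (a, b, i)) ` ({1..k} - {j})) \<le> card ({1..k} - {j})"
    by (simp add: card_image_le)
  also have "\<dots> = k - 1" using assms by simp
  finally have card_S: "card ?S \<le> k" by (rule card_insert_le_m1[OF \<open>0 < k\<close>])
  have fin_S: "finite ?S" by simp
  note sub = neighbors_gadget_Inr_subset[of V E ori k a b j]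
  show "finite (neighbors (gadget_V V E ori k) (gadget_E E ori k) (Inr (a, b, j)))"
    using finite_subset[OF sub fin_S] .
  show "degree (gadget_V V E ori k) (gadget_E E ori k) (Inr (a, b, j)) \<le> k"
    unfolding degree_def using card_mono[OF fin_S sub] card_S by (rule le_trans)
qed

lemma gadget_color_differs:
  assumes "partial_coloring (gadget_V V E ori k) (gadget_E E ori k) k c \<gamma>"
    and "0 < k" and "e \<in> E" and "ori e = (a, b)" and "j \<in> {1..k}"
    and "y \<in> neighbors (gadget_V V E ori k) (gadget_E E ori k) (Inr (a, b, j))"
  shows "\<gamma> y \<noteq> \<gamma> (Inr (a, b, j))"
  by (rule partial_coloring_neighbor_color_differs[OF assms(1) gadget_V_InrI[of e E ori, OF assms(3-5)]
        degree_gadget_Inr_le[OF assms(2,5)] assms(6)])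

lemma gadget_tail_color:
  assumes col: "partial_coloring (gadget_V V E ori k) (gadget_E E ori k) k k \<gamma>"
    and "0 < k" and e: "e \<in> E" "ori e = (a, b)" and "a \<in> V"
  shows "\<gamma> (Inl a) = \<gamma> (Inr (a, b, k))"
proof -
  let ?VV = "gadget_V V E ori k" and ?EE = "gadget_E E ori k"
  let ?K = "(\<lambda>j. Inr (a, b, j)) ` {1..k}"
  have tail: "Inl a \<in> ?VV" using \<open>a \<in> V\<close> by (rule gadget_V_InlI)
  have "?K \<subseteq> ?VV" using gadget_V_InrI[of e E ori, OF e] by blast
  moreover have "finite ?K" and "card ?K = k" by (simp_all add: card_image inj_on_def)
  moreover have "{x, y} \<in> ?EE" if "x \<in> ?K" "y \<in> ?K" "x \<noteq> y" for x y
    using that gadget_E_cliqueI[of e E ori, OF e] by blast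
  moreover have "finite (neighbors ?VV ?EE w) \<and> degree ?VV ?EE w \<le> k" if "w \<in> ?K" for w
    using that degree_gadget_Inr_le[OF \<open>0 < k\<close>] by (auto simp del: atLeastAtMost_iff)
  ultimately have "\<gamma> ` ?K = {1..k}"
    by (rule partial_coloring_clique_uses_all_colors[OF col])
  moreover have "\<gamma> (Inl a) \<in> {1..k}"
    using col tail unfolding partial_coloring_def by blast
  ultimately have "\<gamma> (Inl a) \<in> \<gamma> ` ?K" by simp
  then obtain j where j: "j \<in> {1..k}" "\<gamma> (Inl a) = \<gamma> (Inr (a, b, j))" by blast
  have "j = k"
  proof (rule ccontr)
    assume "j \<noteq> k"
    with j have "Inl a \<in> neighbors ?VV ?EE (Inr (a, b, j))"
      using gadget_E_tailI[of e E ori, OF e] tail unfolding neighbors_def by auto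
    with j show False using gadget_color_differs[OF col \<open>0 < k\<close> e] by blast
  qed
  with j show ?thesis by simp
qed

lemma gadget_ends_colors_differ:
  assumes col: "partial_coloring (gadget_V V E ori k) (gadget_E E ori k) k k \<gamma>"
    and "0 < k" and e: "e \<in> E" "ori e = (a, b)" and "a \<in> V" and "b \<in> V"
  shows "\<gamma> (Inl a) \<noteq> \<gamma> (Inl b)"
proof -
  have "Inl b \<in> neighbors (gadget_V V E ori k) (gadget_E E ori k) (Inr (a, b, k))"
    using gadget_E_headI[of e E ori, OF e] gadget_V_InlI[OF \<open>b \<in> V\<close>]
    unfolding neighbors_def by simp
  then have "\<gamma> (Inl b) \<noteq> \<gamma> (Inr (a, b, k))"
    using gadget_color_differs[OF col \<open>0 < k\<close> e] \<open>0 < k\<close> by simp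
  then show ?thesis
    using gadget_tail_color[OF col \<open>0 < k\<close> e \<open>a \<in> V\<close>] by simp
qed

theorem lemma2:
  fixes V :: "'a set" and E :: "'a set set" and k :: nat
    and ori :: "'a set \<Rightarrow> 'a \<times> 'a" and \<gamma> :: "'a + ('a \<times> 'a \<times> nat) \<Rightarrow> nat"
  assumes "k \<ge> 3"
    and "simple_graph V E"
    and "orientation E ori"
    and "partial_coloring (gadget_V V E ori k) (gadget_E E ori k) k k \<gamma>"
  shows "\<forall>u v. {u, v} \<in> E \<longrightarrow> \<gamma> (Inl u) \<noteq> \<gamma> (Inl v)"
proof (intro allI impI)
  fix u v assume uv: "{u, v} \<in> E"
  obtain a b where ab: "ori {u, v} = (a, b)" by fastforce
  have "{a, b} = {u, v}"
    using assms(3) uv ab unfolding orientation_def by (metis fst_conv snd_conv)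
  moreover from this have "a \<in> V" "b \<in> V"
    using assms(2) uv unfolding simple_graph_def by (auto simp: doubleton_eq_iff)
  moreover have "0 < k" using assms(1) by simp
  ultimately show "\<gamma> (Inl u) \<noteq> \<gamma> (Inl v)"
    using gadget_ends_colors_differ[OF assms(4) _ uv ab] by (auto simp: doubleton_eq_iff)
qed

end
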